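(* Let $P$ be a finite metabelian $p$-group of rank $r$, and let $t\ge1$. Assume that every abelian-by-cyclic subgroup of $P$ has an abelian subgroup of index at most $t$. Then $P$ has an abelian normal subgroup of index at most $t^{2r}$.
   Context: The rank of a finite group is the minimal $r$ such that every subgroup is $r$-generated. A group is metabelian if its commutator subgroup is abelian, and abelian-by-cyclic if it has an abelian normal subgroup with cyclic quotient. *)

theory Defs
  imports "HOL-Algebra.Algebra"
begin

definition sub_index :: "('a, 'b) monoid_scheme \<Rightarrow> 'a set \<Rightarrow> 'a set \<Rightarrow> nat" where
  "sub_index G H A = card (rcosets\<^bsub>G\<lparr>carrier := H\<rparr>\<^esub> A)"

definition abelian_subset :: "('a, 'b) monoid_scheme \<Rightarrow> 'a set \<Rightarrow> bool" where
  "abelian_subset G H \<longleftrightarrow> comm_group (G\<lparr>carrier := H\<rparr>)"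

definition group_rank :: "('a, 'b) monoid_scheme \<Rightarrow> nat" where
  "group_rank G = (LEAST r. \<forall>H. subgroup H G \<longrightarrow>
      (\<exists>S. S \<subseteq> H \<and> finite S \<and> card S \<le> r \<and> generate G S = H))"

definition metabelian :: "('a, 'b) monoid_scheme \<Rightarrow> bool" where
  "metabelian G \<longleftrightarrow> abelian_subset G (derived G (carrier G))"

definition p_group :: "('a, 'b) monoid_scheme \<Rightarrow> nat \<Rightarrow> bool" where
  "p_group G p \<longleftrightarrow> Factorial_Ring.prime p \<and> finite (carrier G) \<and> (\<exists>n. order G = p ^ n)"

definition abelian_by_cyclic :: "('a, 'b) monoid_scheme \<Rightarrow> 'a set \<Rightarrow> bool" where
  "abelian_by_cyclic G H \<longleftrightarrow> (\<exists>A. A \<lhd> G\<lparr>carrier := H\<rparr> \<and> abelian_subset G A \<and>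
      cyclic_group (G\<lparr>carrier := H\<rparr> Mod A))"

end

theory Submission
  imports Defs
begin

text \<open>
  Take a maximal abelian subgroup \<open>A\<close> containing the derived subgroup; it is normal and contains
  its own centralizer. For \<open>x \<in> P\<close> the subgroup \<open>A\<langle>x\<rangle>\<close> is abelian-by-cyclic, so it has an abelian
  subgroup \<open>B\<close> of index \<open>n \<le> t\<close>. By pigeonhole \<open>b = x^k \<in> B\<close> for some \<open>0 < k \<le> n\<close>. The map
  \<open>a \<mapsto> [a, b]\<close> on \<open>A\<close> is constant on cosets of \<open>B\<close>, so \<open>[A, b]\<close> has at most \<open>n\<close> elements,
  and hence every \<open>a \<in> A\<close> has at most \<open>n\<close> conjugates under the powers of \<open>b\<close>. These orbit
  lengths are powers of \<open>p\<close>, so their maximum \<open>J \<le> n\<close> is a multiple of all of them and \<open>b^J\<close>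
  centralizes \<open>A\<close>, i.e. \<open>x^(kJ) \<in> A\<close> with \<open>kJ \<le> t^2\<close>. Since \<open>P/A\<close> is abelian and generated by
  the images of \<open>r\<close> elements, each of order at most \<open>t^2\<close>, the index of \<open>A\<close> is at most \<open>t^(2r)\<close>.
\<close>

lemma Least_pos_dvd_if_diff_closed:
  fixes P :: "nat \<Rightarrow> bool"
  assumes diff: "\<And>i j. P i \<Longrightarrow> P j \<Longrightarrow> i \<le> j \<Longrightarrow> P (j - i)" and "P n"
  shows "(LEAST i. 0 < i \<and> P i) dvd n"
proof (cases "n = 0")
  case False
  define d where "d = (LEAST i. 0 < i \<and> P i)"
  have d: "0 < d" "P d"
    using LeastI[of "\<lambda>i. 0 < i \<and> P i" n] False \<open>P n\<close> unfolding d_def by auto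
  have "d dvd m" if "P m" for m
    using that
  proof (induction m rule: less_induct)
    case (less m)
    show ?case
    proof (cases "m < d")
      case True
      then have "\<not> (0 < m \<and> P m)" unfolding d_def by (rule not_less_Least)
      then show ?thesis using less.prems by simp
    next
      case False
      then have "P (m - d)" using diff[OF d(2) less.prems] by simp
      moreover have "m - d < m" using False d(1) by simp
      ultimately have "d dvd m - d" by (rule less.IH[rotated])
      moreover have "d \<le> m" using False by simp
      ultimately show ?thesis by (rule dvd_diffD[OF _ dvd_refl])
    qed
  qed
  then show ?thesis using \<open>P n\<close> unfolding d_def .
qed simp

lemma dvd_if_dvd_prime_power_le:
  fixes p :: nat
  assumes "Factorial_Ring.prime p" "x dvd p ^ e" "y dvd p ^ e" "x \<le> y"
  shows "x dvd y"
proof -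
  obtain i where i: "x = p ^ i" using divides_primepow[OF assms(1,2)] by auto
  obtain j where j: "y = p ^ j" using divides_primepow[OF assms(1,3)] by auto
  have "1 < p" using assms(1) prime_gt_1_nat by blast
  then have "i \<le> j" using assms(4) i j power_le_imp_le_exp by blast
  then show ?thesis using i j le_imp_power_dvd by blast
qed

lemma card_image_le_card_image_if_factors:
  assumes "finite A" and "\<And>a a'. a \<in> A \<Longrightarrow> a' \<in> A \<Longrightarrow> g a = g a' \<Longrightarrow> f a = f a'"
  shows "card (f ` A) \<le> card (g ` A)"
proof (rule surj_card_le)
  define h where "h y = f (SOME a. a \<in> A \<and> g a = y)" for y
  show "f ` A \<subseteq> h ` g ` A"
  proof (rule image_subsetI)
    fix a assume a: "a \<in> A"
    then have "\<exists>a'. a' \<in> A \<and> g a' = g a" by blast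
    then have "(SOME a'. a' \<in> A \<and> g a' = g a) \<in> A \<and> g (SOME a'. a' \<in> A \<and> g a' = g a) = g a"
      by (rule someI_ex)
    then have "f a = h (g a)" unfolding h_def using a assms(2) by metis
    then show "f a \<in> h ` g ` A" using a by blast
  qed
qed (use assms in simp)

context group
begin

lemma inv_mult_cancel_left: "x \<in> carrier G \<Longrightarrow> y \<in> carrier G \<Longrightarrow> inv x \<otimes> (x \<otimes> y) = y"
  by (simp add: m_assoc[symmetric])

lemma mult_inv_cancel_left: "x \<in> carrier G \<Longrightarrow> y \<in> carrier G \<Longrightarrow> x \<otimes> (inv x \<otimes> y) = y"
  by (simp add: m_assoc[symmetric])

lemma inv_commute:
  assumes "g \<in> carrier G" "s \<in> carrier G" "g \<otimes> s = s \<otimes> g"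
  shows "inv g \<otimes> s = s \<otimes> inv g"
proof -
  have "inv g \<otimes> s = inv g \<otimes> (s \<otimes> g) \<otimes> inv g" using assms(1,2) by (simp add: m_assoc)
  also have "\<dots> = inv g \<otimes> (g \<otimes> s) \<otimes> inv g" using assms(3) by simp
  also have "\<dots> = s \<otimes> inv g" using assms(1,2) by (simp add: m_assoc[symmetric])
  finally show ?thesis .
qed

lemma nat_pow_diff:
  fixes i j :: nat
  assumes "x \<in> carrier G" "i \<le> j"
  shows "x [^] (j - i) = x [^] j \<otimes> inv (x [^] i)"
proof -
  have "x [^] j = x [^] (j - i) \<otimes> x [^] i" using assms by (simp add: nat_pow_mult)
  then show ?thesis using assms(1) by (simp add: m_assoc)
qed

lemma subgroup_nat_pow_closed: "subgroup H G \<Longrightarrow> h \<in> H \<Longrightarrow> h [^] (n::nat) \<in> H"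
  using subgroup_int_pow_closed[of H h "int n"] by (simp add: int_pow_int)

section \<open>Centralizers and self-centralizing abelian subgroups\<close>

definition centralizer :: "'a set \<Rightarrow> 'a set" where
  "centralizer S = {g \<in> carrier G. \<forall>s\<in>S. g \<otimes> s = s \<otimes> g}"

lemma centralizer_subset_carrier: "centralizer S \<subseteq> carrier G"
  by (auto simp: centralizer_def)

lemma subgroup_centralizer:
  assumes "S \<subseteq> carrier G"
  shows "subgroup (centralizer S) G"
proof (rule subgroupI)
  have "\<one> \<in> centralizer S" using assms unfolding centralizer_def by auto
  then show "centralizer S \<noteq> {}" by blast
next
  fix g assume "g \<in> centralizer S"
  then show "inv g \<in> centralizer S"
    using assms inv_commute unfolding centralizer_def by (simp add: subset_iff)
next
  fix g h assume gh: "g \<in> centralizer S" "h \<in> centralizer S"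
  have "g \<otimes> h \<otimes> s = s \<otimes> (g \<otimes> h)" if "s \<in> S" for s
  proof -
    have s: "s \<in> carrier G" "g \<otimes> s = s \<otimes> g" "h \<otimes> s = s \<otimes> h"
      using that assms gh unfolding centralizer_def by auto
    have "g \<otimes> h \<otimes> s = g \<otimes> (s \<otimes> h)" using gh s by (simp add: centralizer_def m_assoc)
    also have "\<dots> = s \<otimes> (g \<otimes> h)" using gh s by (simp add: centralizer_def m_assoc[symmetric])
    finally show ?thesis .
  qed
  then show "g \<otimes> h \<in> centralizer S" using gh unfolding centralizer_def by simp
qed (rule centralizer_subset_carrier)

lemma subset_centralizer_commute:
  "S \<subseteq> carrier G \<Longrightarrow> T \<subseteq> carrier G \<Longrightarrow> S \<subseteq> centralizer T \<longleftrightarrow> T \<subseteq> centralizer S"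
  by (auto simp: centralizer_def)

lemma generate_subset_centralizer:
  "S \<subseteq> centralizer T \<Longrightarrow> T \<subseteq> carrier G \<Longrightarrow> generate G S \<subseteq> centralizer T"
  by (simp add: generate_subgroup_incl subgroup_centralizer)

lemma generate_abelian:
  assumes "S \<subseteq> carrier G" "S \<subseteq> centralizer S"
  shows "generate G S \<subseteq> centralizer (generate G S)"
proof -
  have gen: "generate G S \<subseteq> carrier G" using assms(1) by (rule generate_incl)
  have "generate G S \<subseteq> centralizer S" using assms by (simp add: generate_subset_centralizer)
  then have "S \<subseteq> centralizer (generate G S)" using subset_centralizer_commute[OF assms(1) gen] by simp
  then show ?thesis using gen by (rule generate_subset_centralizer)
qed

lemma abelian_subset_iff_subset_centralizer:
  assumes "subgroup A G"
  shows "abelian_subset G A \<longleftrightarrow> A \<subseteq> centralizer A"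
proof
  assume "abelian_subset G A"
  then have "comm_group (G\<lparr>carrier := A\<rparr>)" unfolding abelian_subset_def .
  from comm_groupE(4)[OF this] show "A \<subseteq> centralizer A"
    using subgroup.subset[OF assms] unfolding centralizer_def by auto
next
  assume "A \<subseteq> centralizer A"
  moreover have "group (G\<lparr>carrier := A\<rparr>)" using assms by (rule subgroup_imp_group)
  ultimately show "abelian_subset G A" unfolding abelian_subset_def
    by (intro group.group_comm_groupI) (auto simp: centralizer_def)
qed

lemma ex_self_centralizing_abelian_subgroup:
  assumes fin: "finite (carrier G)" and D: "subgroup D G" "D \<subseteq> centralizer D"
  obtains A where "subgroup A G" "D \<subseteq> A" "A \<subseteq> centralizer A" "centralizer A \<subseteq> A"
proof -
  define \<A> where "\<A> = {A. subgroup A G \<and> D \<subseteq> A \<and> A \<subseteq> centralizer A}"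
  have "\<A> \<subseteq> Pow (carrier G)" unfolding \<A>_def using subgroup.subset by blast
  then have "finite \<A>" using fin finite_subset by blast
  moreover have "D \<in> \<A>" using D unfolding \<A>_def by simp
  ultimately obtain A where A: "A \<in> \<A>" and max: "\<And>B. B \<in> \<A> \<Longrightarrow> A \<subseteq> B \<Longrightarrow> A = B"
    using finite_has_maximal[of \<A>] by blast
  then have sub: "subgroup A G" "D \<subseteq> A" "A \<subseteq> centralizer A" unfolding \<A>_def by auto
  have "y \<in> A" if y: "y \<in> centralizer A" for y
  proof -
    define T where "T = generate G (insert y A)"
    have ins: "insert y A \<subseteq> carrier G"
      using y centralizer_subset_carrier subgroup.subset[OF sub(1)] by blast
    have "insert y A \<subseteq> centralizer (insert y A)"
      using y sub(3) ins unfolding centralizer_def by (auto simp: subset_iff)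
    moreover have yAT: "insert y A \<subseteq> T" unfolding T_def using generate.incl[of _ "insert y A" G] by blast
    ultimately have "T \<in> \<A>"
      using generate_is_subgroup[OF ins] generate_abelian[OF ins] sub(2) unfolding \<A>_def T_def by auto
    moreover have "A \<subseteq> T" using yAT by blast
    ultimately have "A = T" by (rule max)
    then show "y \<in> A" using yAT by blast
  qed
  then show thesis using that sub by blast
qed

lemma normal_if_derived_subset:
  assumes "subgroup A G" "derived G (carrier G) \<subseteq> A"
  shows "A \<lhd> G"
  unfolding normal_inv_iff
proof (intro conjI ballI assms(1))
  fix g h assume g: "g \<in> carrier G" and h: "h \<in> A"
  have hc: "h \<in> carrier G" using subgroup.mem_carrier[OF assms(1) h] .
  have "g \<otimes> h \<otimes> inv g \<otimes> inv h \<in> derived G (carrier G)"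
    unfolding derived_def by (intro generate.incl UN_I[OF g] UN_I[OF hc] singletonI)
  then have "g \<otimes> h \<otimes> inv g \<otimes> inv h \<in> A" using assms(2) by blast
  then have "g \<otimes> h \<otimes> inv g \<otimes> inv h \<otimes> h \<in> A" using h by (rule subgroup.m_closed[OF assms(1)])
  moreover have "g \<otimes> h \<otimes> inv g \<otimes> inv h \<otimes> h = g \<otimes> h \<otimes> inv g"
    using g hc by (simp add: m_assoc)
  ultimately show "g \<otimes> h \<otimes> inv g \<in> A" by simp
qed

section \<open>Commutators and conjugation periods\<close>

definition commutator :: "'a \<Rightarrow> 'a \<Rightarrow> 'a" where
  "commutator a b = inv a \<otimes> (inv b \<otimes> a \<otimes> b)"

lemma commutator_closed [simp]: "a \<in> carrier G \<Longrightarrow> b \<in> carrier G \<Longrightarrow> commutator a b \<in> carrier G"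
  by (simp add: commutator_def)

lemma commutator_mem_normal:
  "N \<lhd> G \<Longrightarrow> a \<in> N \<Longrightarrow> b \<in> carrier G \<Longrightarrow> commutator a b \<in> N"
  unfolding commutator_def
  by (intro subgroup.m_closed[OF normal_imp_subgroup] subgroup.m_inv_closed[OF normal_imp_subgroup]
      normal.inv_op_closed1)

lemma commutator_mult_right:
  assumes "a \<in> carrier G" "g \<in> carrier G" "h \<in> carrier G"
  shows "commutator a (g \<otimes> h) = commutator a g \<otimes> commutator (inv g \<otimes> a \<otimes> g) h"
  using assms
  by (simp add: commutator_def inv_mult_group m_assoc inv_mult_cancel_left mult_inv_cancel_left)

lemma commutator_mult_left:
  assumes A: "A \<lhd> G" "A \<subseteq> centralizer A" and a: "a \<in> A" "a' \<in> A" and b: "b \<in> carrier G"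
  shows "commutator (a \<otimes> a') b = commutator a b \<otimes> commutator a' b"
proof -
  have sg: "subgroup A G" using A(1) by (rule normal_imp_subgroup)
  have ac: "a \<in> carrier G" "a' \<in> carrier G" using a subgroup.mem_carrier[OF sg] by auto
  define u where "u = inv b \<otimes> a \<otimes> b"
  define v where "v = inv b \<otimes> a' \<otimes> b"
  have uv: "u \<in> carrier G" "v \<in> carrier G" using ac b unfolding u_def v_def by auto
  have "commutator a b \<in> A" using A(1) a(1) b by (rule commutator_mem_normal)
  then have "a' \<otimes> commutator a b = commutator a b \<otimes> a'"
    using A(2) a(2) unfolding centralizer_def by blast
  then have comm: "inv a' \<otimes> commutator a b = commutator a b \<otimes> inv a'"
    using ac b by (intro inv_commute) auto
  have "inv b \<otimes> (a \<otimes> a') \<otimes> b = u \<otimes> v"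
    using ac b unfolding u_def v_def by (simp add: m_assoc mult_inv_cancel_left)
  then have "commutator (a \<otimes> a') b = inv a' \<otimes> commutator a b \<otimes> v"
    using ac b uv unfolding commutator_def u_def by (simp add: inv_mult_group m_assoc)
  also have "\<dots> = commutator a b \<otimes> commutator a' b"
    using comm ac b uv unfolding commutator_def v_def by (simp add: m_assoc)
  finally show ?thesis .
qed

lemma commutator_mult_commuting_left:
  assumes "d \<in> carrier G" "a \<in> carrier G" "b \<in> carrier G" "d \<otimes> b = b \<otimes> d"
  shows "commutator (d \<otimes> a) b = commutator a b"
proof -
  have "inv b \<otimes> d = d \<otimes> inv b" using inv_commute[OF assms(3,1) assms(4)[symmetric]] .
  then have "inv b \<otimes> (d \<otimes> a) \<otimes> b = d \<otimes> (inv b \<otimes> a \<otimes> b)"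
    using assms(1-3) by (simp add: m_assoc[symmetric])
  then show ?thesis
    using assms(1-3) by (simp add: commutator_def inv_mult_group m_assoc inv_mult_cancel_left)
qed

lemma commutator_eq_imp_mem_centralizer:
  assumes a: "a \<in> carrier G" and g: "g \<in> carrier G" and h: "h \<in> carrier G"
    and eq: "commutator a g = commutator a h"
  shows "h \<otimes> inv g \<in> centralizer {a}"
proof -
  have conj: "inv g \<otimes> a \<otimes> g = inv h \<otimes> a \<otimes> h"
    using eq a g h unfolding commutator_def by simp
  have "h \<otimes> inv g \<otimes> a = h \<otimes> (inv g \<otimes> a \<otimes> g) \<otimes> inv g"
    using a g h by (simp add: m_assoc)
  also have "\<dots> = a \<otimes> (h \<otimes> inv g)"
    unfolding conj using a g h by (simp add: m_assoc mult_inv_cancel_left)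
  finally show ?thesis using g h unfolding centralizer_def by simp
qed

lemma commutator_pow_mem_image:
  assumes A: "A \<lhd> G" "A \<subseteq> centralizer A" and a: "a \<in> A" and b: "b \<in> carrier G"
  shows "commutator a (b [^] (n::nat)) \<in> (\<lambda>a. commutator a b) ` A"
proof -
  have sg: "subgroup A G" using A(1) by (rule normal_imp_subgroup)
  have ac: "a \<in> carrier G" using subgroup.mem_carrier[OF sg a] .
  show ?thesis
  proof (induction n)
    case 0
    have "commutator a (b [^] (0::nat)) = commutator \<one> b"
      using ac b by (simp add: commutator_def)
    then show ?case using subgroup.one_closed[OF sg] by blast
  next
    case (Suc n)
    then obtain a' where a': "a' \<in> A" "commutator a (b [^] n) = commutator a' b" by blast
    define c where "c = inv (b [^] n) \<otimes> a \<otimes> b [^] n"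
    have c: "c \<in> A" unfolding c_def using A(1) a b by (simp add: normal.inv_op_closed1)
    have "b [^] n \<in> carrier G" using b by simp
    then have "commutator a (b [^] Suc n) = commutator a (b [^] n) \<otimes> commutator c b"
      unfolding c_def nat_pow_Suc using ac b by (intro commutator_mult_right)
    also have "\<dots> = commutator (a' \<otimes> c) b" using commutator_mult_left[OF A a'(1) c b] a'(2) by simp
    finally show ?case using subgroup.m_closed[OF sg a'(1) c] by blast
  qed
qed

text \<open>\<open>conj_period b a\<close> is the length of the orbit of \<open>a\<close> under conjugation by the powers of \<open>b\<close>.\<close>

definition conj_period :: "'a \<Rightarrow> 'a \<Rightarrow> nat" where
  "conj_period b a = (LEAST i. 0 < i \<and> b [^] i \<in> centralizer {a})"

lemma conj_period:
  assumes "finite (carrier G)" "a \<in> carrier G" "b \<in> carrier G"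
  shows "0 < conj_period b a" "b [^] conj_period b a \<in> centralizer {a}"
proof -
  have "0 < ord b \<and> b [^] ord b \<in> centralizer {a}"
    using assms ord_ge_1[OF assms(1,3)] by (simp add: centralizer_def)
  then have "0 < conj_period b a \<and> b [^] conj_period b a \<in> centralizer {a}"
    unfolding conj_period_def by (rule LeastI)
  then show "0 < conj_period b a" "b [^] conj_period b a \<in> centralizer {a}" by auto
qed

lemma conj_period_dvd:
  assumes "a \<in> carrier G" "b \<in> carrier G" "b [^] n \<in> centralizer {a}"
  shows "conj_period b a dvd n"
  unfolding conj_period_def
proof (rule Least_pos_dvd_if_diff_closed[where P = "\<lambda>i. b [^] i \<in> centralizer {a}", OF _ assms(3)])
  fix i j :: nat assume ij: "b [^] i \<in> centralizer {a}" "b [^] j \<in> centralizer {a}" "i \<le> j"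
  have sg: "subgroup (centralizer {a}) G" using assms(1) by (simp add: subgroup_centralizer)
  have "b [^] j \<otimes> inv (b [^] i) \<in> centralizer {a}"
    using subgroup.m_closed[OF sg ij(2) subgroup.m_inv_closed[OF sg ij(1)]] .
  then show "b [^] (j - i) \<in> centralizer {a}" using nat_pow_diff[OF assms(2) ij(3)] by simp
qed

lemma conj_period_le_card_commutator_image:
  assumes fin: "finite (carrier G)" and A: "A \<lhd> G" "A \<subseteq> centralizer A"
    and a: "a \<in> A" and b: "b \<in> carrier G"
  shows "conj_period b a \<le> card ((\<lambda>a. commutator a b) ` A)"
proof -
  have sg: "subgroup A G" using A(1) by (rule normal_imp_subgroup)
  have ac: "a \<in> carrier G" using subgroup.mem_carrier[OF sg a] .
  have finA: "finite A" using fin subgroup.subset[OF sg] finite_subset by blast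
  have distinct: "commutator a (b [^] i) \<noteq> commutator a (b [^] j)"
    if "i < j" "j < conj_period b a" for i j
  proof
    assume "commutator a (b [^] i) = commutator a (b [^] j)"
    then have "b [^] j \<otimes> inv (b [^] i) \<in> centralizer {a}"
      using ac b by (intro commutator_eq_imp_mem_centralizer) auto
    moreover have "b [^] (j - i) = b [^] j \<otimes> inv (b [^] i)" using b \<open>i < j\<close> by (simp add: nat_pow_diff)
    ultimately have "b [^] (j - i) \<in> centralizer {a}" by simp
    moreover have "j - i < conj_period b a" using that by simp
    ultimately show False
      using not_less_Least[of "j - i" "\<lambda>i. 0 < i \<and> b [^] i \<in> centralizer {a}"] \<open>i < j\<close>
      unfolding conj_period_def by simp
  qed
  have "inj_on (\<lambda>i. commutator a (b [^] i)) {..<conj_period b a}"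
  proof (rule inj_onI)
    fix i j assume "i \<in> {..<conj_period b a}" "j \<in> {..<conj_period b a}"
      and "commutator a (b [^] i) = commutator a (b [^] j)"
    then show "i = j" using distinct by (metis lessThan_iff linorder_neqE_nat)
  qed
  moreover have "(\<lambda>i. commutator a (b [^] i)) ` {..<conj_period b a} \<subseteq> (\<lambda>a. commutator a b) ` A"
    using commutator_pow_mem_image[OF A a b] by blast
  ultimately show ?thesis using card_inj_on_le finA by fastforce
qed

text \<open>In a \<open>p\<close>-group all conjugation periods divide a power of \<open>p\<close>, so the largest one is
  a multiple of all the others.\<close>

lemma ex_pow_mem_centralizer_le_card_commutator_image:
  assumes p: "Factorial_Ring.prime p" "order G = p ^ e"
    and A: "A \<lhd> G" "A \<subseteq> centralizer A" and b: "b \<in> carrier G"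
  obtains J where "0 < J" "J \<le> card ((\<lambda>a. commutator a b) ` A)" "b [^] J \<in> centralizer A"
proof -
  have fin: "finite (carrier G)"
    unfolding order_gt_0_iff_finite[symmetric] using p by (simp add: prime_gt_0_nat)
  have sg: "subgroup A G" using A(1) by (rule normal_imp_subgroup)
  have finA: "finite A" using fin subgroup.subset[OF sg] finite_subset by blast
  define J where "J = Max (conj_period b ` A)"
  obtain a0 where a0: "a0 \<in> A" "J = conj_period b a0"
    using Max_in[of "conj_period b ` A"] finA subgroup.one_closed[OF sg] unfolding J_def by blast
  have dvd: "conj_period b a dvd p ^ e" if "a \<in> A" for a
  proof -
    have "conj_period b a dvd ord b"
      using that b subgroup.mem_carrier[OF sg] by (intro conj_period_dvd) (auto simp: centralizer_def)
    then show ?thesis using ord_dvd_group_order[OF b] p(2) by (metis dvd_trans)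
  qed
  have "b [^] J \<in> centralizer {a}" if a: "a \<in> A" for a
  proof -
    have ac: "a \<in> carrier G" using subgroup.mem_carrier[OF sg a] .
    have "conj_period b a \<le> J" unfolding J_def using finA a by simp
    then have "conj_period b a dvd J"
      using dvd_if_dvd_prime_power_le[OF p(1) dvd[OF a]] dvd[OF a0(1)] a0(2) by simp
    then obtain q where "J = conj_period b a * q" by blast
    then have "b [^] J = (b [^] conj_period b a) [^] q" using b by (simp add: nat_pow_pow)
    then show ?thesis
      using subgroup_nat_pow_closed[OF subgroup_centralizer conj_period(2)[OF fin ac b]] ac by simp
  qed
  then have "b [^] J \<in> centralizer A" using b unfolding centralizer_def by auto
  moreover have "0 < J" using conj_period(1)[OF fin _ b] a0 subgroup.mem_carrier[OF sg] by simp
  moreover have "J \<le> card ((\<lambda>a. commutator a b) ` A)"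
    using conj_period_le_card_commutator_image[OF fin A a0(1) b] a0(2) by simp
  ultimately show thesis using that by blast
qed

lemma sub_index_eq_card_rcosets: "sub_index G H B = card ((\<lambda>h. B #> h) ` H)"
  unfolding sub_index_def by (auto simp: RCOSETS_def r_coset_def intro!: arg_cong[where f = card])

lemma rcos_eq_imp_mult_inv_mem:
  "subgroup B G \<Longrightarrow> x \<in> carrier G \<Longrightarrow> y \<in> carrier G \<Longrightarrow> B #> x = B #> y \<Longrightarrow> y \<otimes> inv x \<in> B"
  by (metis is_group repr_independenceD subgroup.rcos_module_imp)

lemma ex_pow_mem_le_sub_index:
  assumes H: "subgroup H G" "finite H" and B: "subgroup B G" "B \<subseteq> H" and x: "x \<in> H"
  obtains k where "0 < k" "k \<le> sub_index G H B" "x [^] k \<in> B"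
proof -
  define n where "n = sub_index G H B"
  have xc: "x \<in> carrier G" using subgroup.mem_carrier[OF H(1) x] .
  have "(\<lambda>i. B #> x [^] i) ` {..n} \<subseteq> (\<lambda>h. B #> h) ` H"
    using subgroup_nat_pow_closed[OF H(1) x] by blast
  then have "card ((\<lambda>i. B #> x [^] i) ` {..n}) \<le> n"
    unfolding n_def sub_index_eq_card_rcosets using H(2) by (simp add: card_mono)
  then have "\<not> inj_on (\<lambda>i. B #> x [^] i) {..n}" by (intro pigeonhole) simp
  then obtain i j where ij: "i < j" "j \<le> n" "B #> x [^] i = B #> x [^] j"
    unfolding inj_on_def by (metis atMost_iff linorder_neqE_nat)
  then have "x [^] (j - i) \<in> B"
    using rcos_eq_imp_mult_inv_mem[OF B(1) _ _ ij(3)] xc by (simp add: nat_pow_diff)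
  then show thesis using that[of "j - i"] ij unfolding n_def by simp
qed

lemma card_commutator_image_le_sub_index:
  assumes H: "subgroup H G" "finite H" and AH: "A \<subseteq> H"
    and B: "subgroup B G" "B \<subseteq> centralizer B" and b: "b \<in> B"
  shows "card ((\<lambda>a. commutator a b) ` A) \<le> sub_index G H B"
proof -
  have Ac: "A \<subseteq> carrier G" using AH subgroup.subset[OF H(1)] by blast
  have bc: "b \<in> carrier G" using subgroup.mem_carrier[OF B(1) b] .
  have "card ((\<lambda>a. commutator a b) ` A) \<le> card ((\<lambda>a. B #> a) ` A)"
  proof (rule card_image_le_card_image_if_factors)
    show "finite A" using H(2) AH finite_subset by blast
    fix a a' assume "a \<in> A" "a' \<in> A" "B #> a = B #> a'"
    moreover from this have ac: "a \<in> carrier G" "a' \<in> carrier G" using Ac by auto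
    ultimately have "a' \<otimes> inv a \<in> B" using rcos_eq_imp_mult_inv_mem[OF B(1)] by blast
    then have "a' \<otimes> inv a \<otimes> b = b \<otimes> (a' \<otimes> inv a)" using B(2) b unfolding centralizer_def by blast
    then have "commutator (a' \<otimes> inv a \<otimes> a) b = commutator a b"
      using ac bc by (intro commutator_mult_commuting_left) auto
    then show "commutator a b = commutator a' b" using ac by (simp add: m_assoc)
  qed
  also have "\<dots> \<le> card ((\<lambda>h. B #> h) ` H)" using H(2) AH by (intro card_mono image_mono) auto
  finally show ?thesis unfolding sub_index_eq_card_rcosets .
qed

lemma ex_pow_mem_self_centralizing_le_sub_index_sq:
  assumes p: "Factorial_Ring.prime p" "order G = p ^ e"
    and A: "A \<lhd> G" "A \<subseteq> centralizer A" "centralizer A \<subseteq> A"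
    and H: "subgroup H G" "A \<subseteq> H" "x \<in> H"
    and B: "subgroup B G" "B \<subseteq> H" "B \<subseteq> centralizer B"
  obtains m where "0 < m" "m \<le> sub_index G H B ^ 2" "x [^] m \<in> A"
proof -
  have "finite (carrier G)" unfolding order_gt_0_iff_finite[symmetric] using p by (simp add: prime_gt_0_nat)
  then have fin: "finite H" using subgroup.subset[OF H(1)] finite_subset by blast
  obtain k where k: "0 < k" "k \<le> sub_index G H B" "x [^] k \<in> B"
    using ex_pow_mem_le_sub_index[OF H(1) fin B(1,2) H(3)] .
  have xc: "x \<in> carrier G" using subgroup.mem_carrier[OF H(1,3)] .
  obtain J where J: "0 < J" "J \<le> card ((\<lambda>a. commutator a (x [^] k)) ` A)"
      "(x [^] k) [^] J \<in> centralizer A"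
    using ex_pow_mem_centralizer_le_card_commutator_image[OF p A(1,2), of "x [^] k"] xc by auto
  have "J \<le> sub_index G H B"
    using J(2) card_commutator_image_le_sub_index[OF H(1) fin H(2) B(1,3) k(3)] by simp
  then have "k * J \<le> sub_index G H B ^ 2" using k(2) by (simp add: power2_eq_square mult_le_mono)
  moreover have "x [^] (k * J) \<in> A" using J(3) A(3) xc by (auto simp: nat_pow_pow)
  ultimately show thesis using that[of "k * J"] k(1) J(1) by simp
qed

section \<open>Subgroups of the form \<open>N\<langle>x\<rangle>\<close>\<close>

lemma mem_set_mult_generate_iff:
  "x \<in> carrier G \<Longrightarrow> y \<in> N <#> generate G {x} \<longleftrightarrow> (\<exists>n\<in>N. \<exists>k::int. y = n \<otimes> x [^] k)"
  by (auto simp: set_mult_def generate_pow)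

lemma subgroup_set_mult_generate:
  "N \<lhd> G \<Longrightarrow> x \<in> carrier G \<Longrightarrow> subgroup (N <#> generate G {x}) G"
  by (simp add: mult_norm_subgroup generate_is_subgroup)

lemma set_mult_generate_supset:
  assumes "subgroup N G" "x \<in> carrier G"
  shows "N \<subseteq> N <#> generate G {x}" "x \<in> N <#> generate G {x}"
proof -
  show "N \<subseteq> N <#> generate G {x}"
  proof
    fix n assume "n \<in> N"
    moreover have "n = n \<otimes> x [^] (0::int)" using calculation assms subgroup.mem_carrier by fastforce
    ultimately show "n \<in> N <#> generate G {x}" using assms(2) mem_set_mult_generate_iff by blast
  qed
  have "x = \<one> \<otimes> x [^] (1::int)" using assms(2) by simp
  then show "x \<in> N <#> generate G {x}"
    using assms subgroup.one_closed mem_set_mult_generate_iff by blast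
qed

lemma abelian_by_cyclic_set_mult_generate:
  assumes A: "A \<lhd> G" "A \<subseteq> centralizer A" and x: "x \<in> carrier G"
  shows "abelian_by_cyclic G (A <#> generate G {x})"
proof -
  define H where "H = A <#> generate G {x}"
  have sg: "subgroup A G" using A(1) by (rule normal_imp_subgroup)
  have H: "subgroup H G" unfolding H_def using A(1) x by (rule subgroup_set_mult_generate)
  have AH: "A \<subseteq> H" and xH: "x \<in> H" unfolding H_def using set_mult_generate_supset[OF sg x] by auto
  have AN: "A \<lhd> G\<lparr>carrier := H\<rparr>" using normal_restrict_supergroup[OF H A(1) AH] .
  define Q where "Q = G\<lparr>carrier := H\<rparr> Mod A"
  interpret Q: group Q unfolding Q_def using AN by (rule normal.factorgroup_is_group)
  have carrier_Q: "carrier Q = (\<lambda>h. A #> h) ` H"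
    unfolding Q_def FactGroup_def by (auto simp: RCOSETS_def r_coset_def)
  have xQ: "A #> x \<in> carrier Q" unfolding carrier_Q using xH by blast
  have pow: "(A #> x) [^]\<^bsub>Q\<^esub> i = A #> x [^] i" for i :: int
    using normal.FactGroup_int_pow[OF AN, of x i] xH int_pow_consistent[OF H xH, of i]
    unfolding Q_def by (simp add: r_coset_def)
  have "carrier Q = range (\<lambda>i::int. (A #> x) [^]\<^bsub>Q\<^esub> i)"
  proof
    show "carrier Q \<subseteq> range (\<lambda>i::int. (A #> x) [^]\<^bsub>Q\<^esub> i)"
    proof
      fix C assume "C \<in> carrier Q"
      then obtain a i where a: "a \<in> A" and C: "C = A #> (a \<otimes> x [^] (i::int))"
        unfolding carrier_Q H_def using mem_set_mult_generate_iff[OF x] by auto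
      have "C = (A #> a) #> x [^] i"
        unfolding C using a x subgroup.mem_carrier[OF sg] subgroup.subset[OF sg]
        by (simp add: coset_mult_assoc)
      also have "\<dots> = (A #> x) [^]\<^bsub>Q\<^esub> i" using subgroup.rcos_const[OF sg is_group a] pow by simp
      finally show "C \<in> range (\<lambda>i::int. (A #> x) [^]\<^bsub>Q\<^esub> i)" by blast
    qed
    show "range (\<lambda>i::int. (A #> x) [^]\<^bsub>Q\<^esub> i) \<subseteq> carrier Q"
      using Q.int_pow_closed[OF xQ] by blast
  qed
  then have "cyclic_group Q" using xQ Q.cyclic_group by blast
  moreover have "abelian_subset G A" using A(2) abelian_subset_iff_subset_centralizer[OF sg] by simp
  ultimately show ?thesis unfolding abelian_by_cyclic_def H_def[symmetric] Q_def using AN by blast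
qed

lemma ex_pow_mem_le_sq_if_abelian_by_cyclic_index_le:
  fixes t :: real
  assumes p: "Factorial_Ring.prime p" "order G = p ^ e"
    and A: "A \<lhd> G" "A \<subseteq> centralizer A" "centralizer A \<subseteq> A"
    and index: "\<And>H. subgroup H G \<Longrightarrow> abelian_by_cyclic G H \<Longrightarrow>
      \<exists>B. subgroup B G \<and> B \<subseteq> H \<and> abelian_subset G B \<and> real (sub_index G H B) \<le> t"
    and x: "x \<in> carrier G"
  obtains m where "0 < m" "real m \<le> t ^ 2" "x [^] m \<in> A"
proof -
  let ?H = "A <#> generate G {x}"
  have sg: "subgroup A G" using A(1) by (rule normal_imp_subgroup)
  have H: "subgroup ?H G" "A \<subseteq> ?H" "x \<in> ?H"
    using subgroup_set_mult_generate[OF A(1) x] set_mult_generate_supset[OF sg x] by auto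
  obtain B where B: "subgroup B G" "B \<subseteq> ?H" "abelian_subset G B" "real (sub_index G ?H B) \<le> t"
    using index[OF H(1) abelian_by_cyclic_set_mult_generate[OF A(1,2) x]] by blast
  obtain m where m: "0 < m" "m \<le> sub_index G ?H B ^ 2" "x [^] m \<in> A"
    using ex_pow_mem_self_centralizing_le_sub_index_sq[OF p A H B(1,2)]
      B(3) abelian_subset_iff_subset_centralizer[OF B(1)] by blast
  have "real m \<le> real (sub_index G ?H B) ^ 2" using m(2) by (simp add: of_nat_le_iff[symmetric])
  also have "\<dots> \<le> t ^ 2" using B(4) by (intro power_mono) auto
  finally show thesis by (rule that[OF m(1) _ m(3)])
qed

section \<open>Index bounds from generators\<close>

lemma card_set_mult_generate_le:
  assumes K: "subgroup K G" "finite K" and s: "s \<in> carrier G" "0 < m" "s [^] m \<in> K"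
  shows "card (K <#> generate G {s}) \<le> card K * m"
proof -
  have "K <#> generate G {s} \<subseteq> (\<lambda>(k, r). k \<otimes> s [^] r) ` (K \<times> {..<m})"
  proof
    fix y assume "y \<in> K <#> generate G {s}"
    then obtain k i where k: "k \<in> K" and y: "y = k \<otimes> s [^] (i::int)"
      using mem_set_mult_generate_iff[OF s(1)] by blast
    define q r where "q = i div int m" and "r = i mod int m"
    have "0 \<le> r" "r < int m" unfolding r_def using s(2) by simp_all
    then have r: "0 \<le> r" "nat r < m" by (simp_all add: nat_less_iff)
    have "s [^] i = s [^] (int m * q) \<otimes> s [^] r"
      unfolding q_def r_def using s(1) by (simp add: int_pow_mult[symmetric])
    also have "\<dots> = (s [^] m) [^] q \<otimes> s [^] nat r"
      using s(1) r(1) by (simp add: int_pow_pow[symmetric] int_pow_int[symmetric])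
    finally have "y = (k \<otimes> (s [^] m) [^] q) \<otimes> s [^] nat r"
      using y k s(1) subgroup.mem_carrier[OF K(1)] by (simp add: m_assoc)
    moreover have "k \<otimes> (s [^] m) [^] q \<in> K"
      using subgroup.m_closed[OF K(1) k subgroup_int_pow_closed[OF K(1) s(3)]] .
    ultimately show "y \<in> (\<lambda>(k, r). k \<otimes> s [^] r) ` (K \<times> {..<m})" using r(2) by force
  qed
  then have "card (K <#> generate G {s}) \<le> card ((\<lambda>(k, r). k \<otimes> s [^] r) ` (K \<times> {..<m}))"
    using K(2) by (intro card_mono) auto
  also have "\<dots> \<le> card (K \<times> {..<m})" by (rule card_image_le) (use K(2) in simp)
  also have "\<dots> = card K * m" by (simp add: card_cartesian_product)
  finally show ?thesis .
qed

lemma ex_subgroup_card_le_prod: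
  assumes fin: "finite (carrier G)" and A: "subgroup A G" "derived G (carrier G) \<subseteq> A"
    and S: "finite S" "S \<subseteq> carrier G"
    and m: "\<And>s. s \<in> S \<Longrightarrow> 0 < m s \<and> s [^] m s \<in> A"
  shows "\<exists>K. subgroup K G \<and> A \<subseteq> K \<and> S \<subseteq> K \<and> card K \<le> (\<Prod>s\<in>S. m s) * card A"
  using S m
proof (induction S rule: finite_induct)
  case empty
  then show ?case using A(1) by auto
next
  case (insert s S)
  then obtain K where K: "subgroup K G" "A \<subseteq> K" "S \<subseteq> K" "card K \<le> (\<Prod>s\<in>S. m s) * card A"
    by auto
  have s: "s \<in> carrier G" "0 < m s" "s [^] m s \<in> K" using insert.prems K(2) by auto
  define K' where "K' = K <#> generate G {s}"
  have "K \<lhd> G" using normal_if_derived_subset[OF K(1)] A(2) K(2) by blast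
  then have "subgroup K' G" unfolding K'_def using s(1) by (rule subgroup_set_mult_generate)
  moreover have "K \<subseteq> K'" "s \<in> K'" unfolding K'_def using set_mult_generate_supset[OF K(1) s(1)] by auto
  moreover have "card K' \<le> (\<Prod>s\<in>insert s S. m s) * card A"
  proof -
    have "finite K" using finite_subset[OF subgroup.subset[OF K(1)] fin] .
    then have "card K' \<le> card K * m s" unfolding K'_def by (rule card_set_mult_generate_le[OF K(1) _ s])
    also have "\<dots> \<le> (\<Prod>s\<in>S. m s) * card A * m s" using K(4) by simp
    also have "\<dots> = (\<Prod>s\<in>insert s S. m s) * card A" using insert.hyps by simp
    finally show ?thesis .
  qed
  ultimately show ?case using K(2,3) by blast
qed

lemma sub_index_le_prod_if_generate:
  assumes fin: "finite (carrier G)" and A: "subgroup A G" "derived G (carrier G) \<subseteq> A"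
    and S: "finite S" "S \<subseteq> carrier G" "generate G S = carrier G"
    and m: "\<And>s. s \<in> S \<Longrightarrow> 0 < m s \<and> s [^] m s \<in> A"
  shows "sub_index G (carrier G) A \<le> (\<Prod>s\<in>S. m s)"
proof -
  obtain K where K: "subgroup K G" "S \<subseteq> K" "card K \<le> (\<Prod>s\<in>S. m s) * card A"
    using ex_subgroup_card_le_prod[OF fin A S(1,2) m] by blast
  have "carrier G \<subseteq> K" using generate_subgroup_incl[OF K(2,1)] S(3) by simp
  then have "card (carrier G) \<le> card K"
    using finite_subset[OF subgroup.subset[OF K(1)] fin] by (rule card_mono[rotated])
  moreover have "card (rcosets A) * card A = card (carrier G)"
    using lagrange[OF A(1)] unfolding order_def .
  ultimately have "card (rcosets A) * card A \<le> (\<Prod>s\<in>S. m s) * card A" using K(3) by linarith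
  moreover have "0 < card A"
    using subgroup.one_closed[OF A(1)] finite_subset[OF subgroup.subset[OF A(1)] fin]
    by (auto simp: card_gt_0_iff)
  ultimately have "card (rcosets A) \<le> (\<Prod>s\<in>S. m s)" by simp
  moreover have "sub_index G (carrier G) A = card (rcosets A)"
    unfolding sub_index_eq_card_rcosets RCOSETS_def by (auto intro!: arg_cong[where f = card])
  ultimately show ?thesis by simp
qed

lemma ex_generating_set_card_le_group_rank:
  assumes fin: "finite (carrier G)" and H: "subgroup H G"
  obtains S where "S \<subseteq> H" "finite S" "card S \<le> group_rank G" "generate G S = H"
proof -
  let ?generated = "\<lambda>r. \<forall>H. subgroup H G \<longrightarrow>
      (\<exists>S. S \<subseteq> H \<and> finite S \<and> card S \<le> r \<and> generate G S = H)"
  have "?generated (card (carrier G))"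
  proof (intro allI impI)
    fix H assume H: "subgroup H G"
    have "generate G H = H"
      using generate_subgroup_incl[OF subset_refl H] generate.incl[of _ H G] by blast
    moreover have "finite H" "card H \<le> card (carrier G)"
      using fin subgroup.subset[OF H] finite_subset card_mono by auto
    ultimately show "\<exists>S. S \<subseteq> H \<and> finite S \<and> card S \<le> card (carrier G) \<and> generate G S = H"
      by blast
  qed
  then have "?generated (group_rank G)" unfolding group_rank_def by (rule LeastI)
  then show thesis using H that by blast
qed

end

theorem lemma3p17:
  fixes P :: "('a, 'b) monoid_scheme" and p r :: nat and t :: real
  assumes "group P"
    and "p_group P p"
    and "metabelian P"
    and "group_rank P = r"
    and "t \<ge> 1"
    and "\<And>H. subgroup H P \<Longrightarrow> abelian_by_cyclic P H \<Longrightarrow>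
           \<exists>A. subgroup A P \<and> A \<subseteq> H \<and> abelian_subset P A \<and> real (sub_index P H A) \<le> t"
  shows "\<exists>N. N \<lhd> P \<and> abelian_subset P N \<and> real (sub_index P (carrier P) N) \<le> t ^ (2 * r)"
proof -
  interpret group P by fact
  obtain e where p: "Factorial_Ring.prime p" "order P = p ^ e" and fin: "finite (carrier P)"
    using assms(2) unfolding p_group_def by blast
  let ?D = "derived P (carrier P)"
  have D: "subgroup ?D P" "?D \<subseteq> centralizer ?D"
    using assms(3) abelian_subset_iff_subset_centralizer derived_is_subgroup
    unfolding metabelian_def by auto
  obtain A where A: "subgroup A P" "?D \<subseteq> A" "A \<subseteq> centralizer A" "centralizer A \<subseteq> A"
    using ex_self_centralizing_abelian_subgroup[OF fin D] .
  have An: "A \<lhd> P" using A(1,2) by (rule normal_if_derived_subset)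
  have "\<exists>m. 0 < m \<and> real m \<le> t ^ 2 \<and> x [^]\<^bsub>P\<^esub> m \<in> A" if "x \<in> carrier P" for x
    by (rule ex_pow_mem_le_sq_if_abelian_by_cyclic_index_le[OF p An A(3,4) assms(6) that]) auto
  then obtain m where m: "\<And>x. x \<in> carrier P \<Longrightarrow> 0 < m x \<and> real (m x) \<le> t ^ 2 \<and> x [^]\<^bsub>P\<^esub> m x \<in> A"
    by metis
  obtain S where S: "S \<subseteq> carrier P" "finite S" "card S \<le> r" "generate P S = carrier P"
    using ex_generating_set_card_le_group_rank[OF fin subgroup_self] assms(4) by metis
  have "real (sub_index P (carrier P) A) \<le> (\<Prod>s\<in>S. real (m s))"
    using sub_index_le_prod_if_generate[OF fin A(1,2) S(2,1,4), of m] m S(1)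
    by (simp add: subset_iff flip: of_nat_prod of_nat_le_iff)
  also have "\<dots> \<le> (t ^ 2) ^ r"
    using m S(1,3) one_le_power[OF assms(5)] by (intro prod_le_power) (auto simp: subset_iff)
  finally show ?thesis
    using An A(3) abelian_subset_iff_subset_centralizer[OF A(1)] by (auto simp: power_mult)
qed

end
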